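(* In the setting of the context, if $\lambda\in\varrho(T)\setminus\tilde\Lambda$ and $\Omega(\lambda)=0$, then $\mathbb M(\lambda)=\mathbb M(\bar\lambda)^*$.
   Context: Let $(a,b)$ be a real interval, $J$ a constant invertible skew-hermitian $n\times n$ matrix, $q,w$ $n\times n$ matrices of distributions of order $0$ (complex Radon measures) on $(a,b)$, $q$ hermitian, $w$ non-negative; $L^2(w)$ the space of classes of $f$ with $\int f^*wf<\infty$. For $u$ locally BV, $u^\pm$ are right/left limits; balanced means $u=(u^++u^-)/2$. $\Delta_r(x)=r(\{x\})$; $B_\pm(x,\lambda)=J\pm\frac12(\Delta_q(x)-\lambda\Delta_w(x))$; $\Lambda_x$ = set of $\lambda$ with $B_+(x,\lambda)$ or $B_-(x,\lambda)$ singular. Assume $a=x_0<x_1<\dots<x_N<x_{N+1}=b$ ($N\ge0$) with $\Lambda_x\cap\mathbb R=\emptyset$ for $x\notin\{x_1,\dots,x_N\}$; $\tilde\Lambda=\bigcup_{x\notin\{x_1,\dots,x_N\}}\Lambda_x$. Solutions of $Ju'+(q-\lambda w)u=wf$ are balanced locally BV functions satisfying it distributionally. $T_{\max}=\{([u],[f]):u,f\in L^2(w),Ju'+qu=wf\}$, $D_\lambda=\{(u,\lambda u)\in T_{\max}\}$, $n_\pm=\dim D_{\pm i}$, assumed equal; $(v_j,g_j)$, $j=1,\dots,n_+$, linearly independent in $D_i\oplus D_{-i}$ with $(g_k^*Jg_\ell)^-(b)-(g_k^*Jg_\ell)^+(a)=0$; $T=\{(u,f)\in T_{\max}:(g_j^*Ju)^-(b)-(g_j^*Ju)^+(a)=0\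 \forall j\}$ (self-adjoint), $\varrho(T)$ its resolvent set; $g=(g_1,\dots,g_{n_+})$. For $\lambda\notin\tilde\Lambda$, $U_j(\cdot,\lambda)$ is the balanced fundamental matrix of $Ju'+(q-\lambda w)u=0$ on $(x_j,x_{j+1})$ with $U_j(\xi_j,\lambda)=I$ ($\xi_j$ fixed, $q(\{\xi_j\})=w(\{\xi_j\})=0$), extended balanced and zero outside $[x_j,x_{j+1}]$; $\mathscr U=(U_0,\dots,U_N)$. $\mathcal J=\operatorname{diag}(J,\dots,J)$; $\mathcal B(\lambda)=\operatorname{diag}(B_+(x_k,\lambda))_{k=1}^N$, $\mathcal U^-(\lambda)=\operatorname{diag}(U_{k-1}^-(x_k,\lambda))_{k=1}^N$, $\mathcal U^+(\lambda)=\operatorname{diag}(U_k^+(x_k,\lambda))_{k=1}^N$, $E_\top=(0_{nN\times n},I_{nN})$, $E_\bot=(I_{nN},0_{nN\times n})$, $\mathbb B(\lambda)=\mathcal B(\lambda)\mathcal U^+(\lambda)E_\top+\mathcal B(\bar\lambda)^*\mathcal U^-(\lambda)E_\bot$, $\tilde{\mathbb B}(\lambda)=\mathcal B(\lambda)\mathcal U^+(\lambda)E_\top-\mathcal B(\bar\lambda)^*\mathcal U^-(\lambda)E_\bot$. $P_\pm(\lambda)$ orthogonal projections onto $\{\eta:\int_{(x_N,b)}(U_N\eta)^*wU_N\eta<\infty\}$ resp. $\{\eta:\int_{(a,x_1)}(U_0\eta)^*wU_0\eta<\infty\}$; $\mathscr Q_-=(I-P_-,0,\dots,0)$, $\mathscr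 Q_+=(0,\dots,0,I-P_+)$; $A_-(\lambda)=-(g^*JU_0(\cdot,\lambda)P_-(\lambda))^+(a)$, $A_+(\lambda)=(g^*JU_N(\cdot,\lambda)P_+(\lambda))^-(b)$, $\mathscr A_-=(A_-,0,\dots,0)$, $\mathscr A_+=(0,\dots,0,A_+)$. $\mathcal L_0$ = solutions of $Ju'+qu=0$ with $wu=0$; $N_0=\{\eta:\mathscr U(\cdot,0)\eta\in\mathcal L_0\}$; $\mathbb P$ = orthogonal projection onto $N_0^\perp$. $\mathbb F(\lambda)=(\mathbb B;\mathscr Q_-;\mathscr Q_+;\mathscr A_++\mathscr A_-;I-\mathbb P)$, $\mathbb H(\lambda)=\frac12(\tilde{\mathbb B};\mathscr Q_-;-\mathscr Q_+;\mathscr A_--\mathscr A_+;0)$ (block columns), $\mathbb F^\dagger$ the Moore–Penrose pseudoinverse (a left inverse of $\mathbb F(\lambda)$ for $\lambda\in\varrho(T)\setminus\tilde\Lambda$), $\mathbb M(\lambda)=\mathbb P\mathbb F(\lambda)^\dagger\mathbb H(\lambda)\mathcal J^{-1}\mathbb P$, $\Omega(\lambda)=\mathbb H(\lambda)\mathcal J^{-1}\mathbb P\mathbb F(\bar\lambda)^*+\mathbb F(\lambda)\mathbb P\mathcal J^{-1}\mathbb H(\bar\lambda)^*$. *)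

theory Defs
  imports "Jordan_Normal_Form.Schur_Decomposition" "HOL-Library.Extended_Real"
begin

definition hermitian_m :: "complex mat \<Rightarrow> bool" where
  "hermitian_m A \<longleftrightarrow> square_mat A \<and> mat_adjoint A = A"

definition skew_hermitian_m :: "complex mat \<Rightarrow> bool" where
  "skew_hermitian_m A \<longleftrightarrow> square_mat A \<and> mat_adjoint A = - A"

definition nonneg_m :: "complex mat \<Rightarrow> bool" where
  "nonneg_m A \<longleftrightarrow> hermitian_m A \<and>
     (\<forall>v. dim_vec v = dim_row A \<longrightarrow>
        Im (conjugate v \<bullet> (A *\<^sub>v v)) = 0 \<and> 0 \<le> Re (conjugate v \<bullet> (A *\<^sub>v v)))"

definition orth_proj :: "nat \<Rightarrow> complex mat \<Rightarrow> bool" where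
  "orth_proj m P \<longleftrightarrow> P \<in> carrier_mat m m \<and> P * P = P \<and> mat_adjoint P = P"

definition minv :: "complex mat \<Rightarrow> complex mat" where
  "minv A = (SOME B. B \<in> carrier_mat (dim_row A) (dim_row A) \<and>
              A * B = 1\<^sub>m (dim_row A) \<and> B * A = 1\<^sub>m (dim_row A))"

definition pinv :: "complex mat \<Rightarrow> complex mat" where
  "pinv A = (THE X. X \<in> carrier_mat (dim_col A) (dim_row A) \<and> A * X * A = A \<and> X * A * X = X
              \<and> mat_adjoint (A * X) = A * X \<and> mat_adjoint (X * A) = X * A)"

definition bdiag :: "nat \<Rightarrow> nat \<Rightarrow> (nat \<Rightarrow> complex mat) \<Rightarrow> complex mat" where
  "bdiag n K f = mat (n*K) (n*K)
     (\<lambda>(i,j). if i div n = j div n then f (i div n) $$ (i mod n, j mod n) else 0)"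

definition brow :: "nat \<Rightarrow> nat \<Rightarrow> nat \<Rightarrow> complex mat \<Rightarrow> complex mat" where
  "brow n N k X = mat (dim_row X) (n*(N+1))
     (\<lambda>(i,j). if j div n = k then X $$ (i, j mod n) else 0)"

fun vstack :: "nat \<Rightarrow> complex mat list \<Rightarrow> complex mat" where
  "vstack c [] = 0\<^sub>m 0 c"
| "vstack c (A # As) = four_block_mat A (0\<^sub>m (dim_row A) 0) (vstack c As) (0\<^sub>m (dim_row (vstack c As)) 0)"

(* E_top = (0_{nN x n}, I_{nN}),  E_bot = (I_{nN}, 0_{nN x n}) *)
definition Etop :: "nat \<Rightarrow> nat \<Rightarrow> complex mat" where
  "Etop n N = mat (n*N) (n*(N+1)) (\<lambda>(i,j). if j = i + n then 1 else 0)"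

definition Ebot :: "nat \<Rightarrow> nat \<Rightarrow> complex mat" where
  "Ebot n N = mat (n*N) (n*(N+1)) (\<lambda>(i,j). if j = i then 1 else 0)"

(* The atoms Delta_q(x) = q({x}), Delta_w(x) = w({x}) enter only through dq, dw *)
definition Bplus :: "complex mat \<Rightarrow> (real \<Rightarrow> complex mat) \<Rightarrow> (real \<Rightarrow> complex mat) \<Rightarrow> real \<Rightarrow> complex \<Rightarrow> complex mat" where
  "Bplus J dq dw x lam = J + (1/2) \<cdot>\<^sub>m (dq x - lam \<cdot>\<^sub>m dw x)"

definition Bminus :: "complex mat \<Rightarrow> (real \<Rightarrow> complex mat) \<Rightarrow> (real \<Rightarrow> complex mat) \<Rightarrow> real \<Rightarrow> complex \<Rightarrow> complex mat" where
  "Bminus J dq dw x lam = J - (1/2) \<cdot>\<^sub>m (dq x - lam \<cdot>\<^sub>m dw x)"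

definition LambdaX :: "complex mat \<Rightarrow> (real \<Rightarrow> complex mat) \<Rightarrow> (real \<Rightarrow> complex mat) \<Rightarrow> real \<Rightarrow> complex set" where
  "LambdaX J dq dw x = {lam. \<not> invertible_mat (Bplus J dq dw x lam) \<or> \<not> invertible_mat (Bminus J dq dw x lam)}"

definition tLambda :: "complex mat \<Rightarrow> (real \<Rightarrow> complex mat) \<Rightarrow> (real \<Rightarrow> complex mat) \<Rightarrow> ereal \<Rightarrow> ereal \<Rightarrow> nat \<Rightarrow> (nat \<Rightarrow> real) \<Rightarrow> complex set" where
  "tLambda J dq dw a b N xs = (\<Union>x\<in>{x. a < ereal x \<and> ereal x < b \<and> x \<notin> xs ` {1..N}}. LambdaX J dq dw x)"

definition calB where
  "calB n N J dq dw xs lam = bdiag n N (\<lambda>k. Bplus J dq dw (xs (k+1)) lam)"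

(* Um k lam = U_{k-1}^-(x_k,lam),  Up k lam = U_k^+(x_k,lam), k = 1..N *)
definition bbB where
  "bbB n N J dq dw xs Um Up lam =
     calB n N J dq dw xs lam * bdiag n N (\<lambda>k. Up (k+1) lam) * Etop n N
     + mat_adjoint (calB n N J dq dw xs (cnj lam)) * bdiag n N (\<lambda>k. Um (k+1) lam) * Ebot n N"

definition tbbB where
  "tbbB n N J dq dw xs Um Up lam =
     calB n N J dq dw xs lam * bdiag n N (\<lambda>k. Up (k+1) lam) * Etop n N
     - mat_adjoint (calB n N J dq dw xs (cnj lam)) * bdiag n N (\<lambda>k. Um (k+1) lam) * Ebot n N"

definition FF where
  "FF n N J dq dw xs Um Up Pm Pp Am Ap PP lam = vstack (n*(N+1))
     [ bbB n N J dq dw xs Um Up lam,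
       brow n N 0 (1\<^sub>m n - Pm lam),
       brow n N N (1\<^sub>m n - Pp lam),
       brow n N N (Ap lam) + brow n N 0 (Am lam),
       1\<^sub>m (n*(N+1)) - PP ]"

definition HH where
  "HH n N J dq dw xs Um Up Pm Pp Am Ap lam = (1/2) \<cdot>\<^sub>m vstack (n*(N+1))
     [ tbbB n N J dq dw xs Um Up lam,
       brow n N 0 (1\<^sub>m n - Pm lam),
       - brow n N N (1\<^sub>m n - Pp lam),
       brow n N 0 (Am lam) - brow n N N (Ap lam),
       0\<^sub>m (n*(N+1)) (n*(N+1)) ]"

definition calJinv where
  "calJinv n N J = bdiag n (N+1) (\<lambda>_. minv J)"

definition MM where
  "MM n N J dq dw xs Um Up Pm Pp Am Ap PP lam =
     PP * pinv (FF n N J dq dw xs Um Up Pm Pp Am Ap PP lam) * HH n N J dq dw xs Um Up Pm Pp Am Ap lam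
        * calJinv n N J * PP"

definition Omega where
  "Omega n N J dq dw xs Um Up Pm Pp Am Ap PP lam =
     HH n N J dq dw xs Um Up Pm Pp Am Ap lam * calJinv n N J * PP
        * mat_adjoint (FF n N J dq dw xs Um Up Pm Pp Am Ap PP (cnj lam))
   + FF n N J dq dw xs Um Up Pm Pp Am Ap PP lam * PP * calJinv n N J
        * mat_adjoint (HH n N J dq dw xs Um Up Pm Pp Am Ap (cnj lam))"

end

theory Submission
  imports Defs
begin

(* Write F, H for FF, HH at lambda and F', H' for them at cnj lambda, K = calJinv (skew-adjoint
   because J is) and P = PP.  Since B_+(x,mu)^* = -B_-(x, cnj mu), the exceptional set tLambda is
   closed under conjugation, so cnj lambda is admissible as well and F, F' have left inverses
   X = pinv F, X' = pinv F'.  Multiplying Omega(lambda) = H K P F'^* + F P K H'^* = 0 by X on the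
   left and by X'^* on the right gives X H K P = - P K H'^* X'^*; compressing with P and using
   K^* = -K, P^* = P = P^2 turns this into P X H K P = (P X' H' K P)^*, which is the claim. *)

lemma dim_row_mat_adjoint[simp]: "dim_row (mat_adjoint A) = dim_col A"
  and dim_col_mat_adjoint[simp]: "dim_col (mat_adjoint A) = dim_row A"
  by (simp_all add: mat_adjoint_def)

lemma mat_adjoint_carrier_mat[simp]: "mat_adjoint A \<in> carrier_mat m n \<longleftrightarrow> A \<in> carrier_mat n m"
  unfolding carrier_mat_def by auto

lemma index_mat_adjoint[simp]:
  "i < dim_col A \<Longrightarrow> j < dim_row A \<Longrightarrow> mat_adjoint A $$ (i, j) = conjugate (A $$ (j, i))"
  by (simp add: mat_adjoint_def mat_of_rows_def)

lemma mat_adjoint_mat_adjoint[simp]: "mat_adjoint (mat_adjoint A) = A"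
  by (rule eq_matI) auto

lemma mat_adjoint_mult:
  fixes A :: "'a :: conjugatable_field mat"
  assumes "A \<in> carrier_mat m k" "B \<in> carrier_mat k n"
  shows "mat_adjoint (A * B) = mat_adjoint B * mat_adjoint A"
proof (rule eq_matI)
  fix i j assume "i < dim_row (mat_adjoint B * mat_adjoint A)" "j < dim_col (mat_adjoint B * mat_adjoint A)"
  with assms show "mat_adjoint (A * B) $$ (i, j) = (mat_adjoint B * mat_adjoint A) $$ (i, j)"
    by (simp add: scalar_prod_def sum_conjugate conjugate_dist_mul mult.commute)
qed (use assms in simp_all)

lemma conjugate_one[simp]: "conjugate (1 :: 'a :: conjugatable_field) = 1"
proof -
  have "conjugate (1 :: 'a) * conjugate 1 = conjugate 1"
    by (metis conjugate_dist_mul mult_1)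
  then show ?thesis
    by (metis conjugate_zero_iff mult_cancel_left2 one_neq_zero)
qed

lemma mat_adjoint_one[simp]: "mat_adjoint (1\<^sub>m n :: 'a :: conjugatable_field mat) = 1\<^sub>m n"
  by (rule eq_matI) auto

lemma inverse_mat_unique:
  fixes A :: "'a :: semiring_1 mat"
  assumes "A \<in> carrier_mat n n" "B \<in> carrier_mat n n" "C \<in> carrier_mat n n"
    and "B * A = 1\<^sub>m n" "A * C = 1\<^sub>m n"
  shows "B = C"
proof -
  have "B = B * (A * C)" using assms(2,5) carrier_matD[OF assms(2)] by simp
  also have "\<dots> = (B * A) * C" using assoc_mult_mat[OF assms(2,1,3)] by simp
  finally show ?thesis using assms(4) carrier_matD[OF assms(3)] by simp
qed

lemma mat_adjoint_inverse:
  fixes A :: "'a :: conjugatable_field mat"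
  assumes "A \<in> carrier_mat n n" "B \<in> carrier_mat n n" "A * B = 1\<^sub>m n"
  shows "mat_adjoint B * mat_adjoint A = 1\<^sub>m n"
  using mat_adjoint_mult[OF assms(1,2)] assms(3) by simp

lemma invertible_mat_uminus_adjoint:
  fixes A :: "'a :: conjugatable_field mat"
  assumes A: "A \<in> carrier_mat n n" and inv: "invertible_mat A"
  shows "invertible_mat (- mat_adjoint A)"
proof -
  obtain B where AB: "A * B = 1\<^sub>m n" and BA: "B * A = 1\<^sub>m (dim_row B)"
    using inv A unfolding invertible_mat_def inverts_mat_def by auto
  have B: "B \<in> carrier_mat n n"
    using arg_cong[OF AB, of dim_col] arg_cong[OF BA, of dim_col] A by auto
  with BA have BA: "B * A = 1\<^sub>m n" by simp
  have "(- mat_adjoint A) * (- mat_adjoint B) = 1\<^sub>m n"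
    using mat_adjoint_inverse[OF B A BA] carrier_matD[OF A] carrier_matD[OF B] by simp
  moreover have "(- mat_adjoint B) * (- mat_adjoint A) = 1\<^sub>m n"
    using mat_adjoint_inverse[OF A B AB] carrier_matD[OF A] carrier_matD[OF B] by simp
  ultimately show ?thesis
    using A B unfolding invertible_mat_def inverts_mat_def
    by (auto intro!: exI[of _ "- mat_adjoint B"])
qed

lemma minv_inverse:
  assumes J: "J \<in> carrier_mat n n" "invertible_mat J"
  shows "minv J \<in> carrier_mat n n" "J * minv J = 1\<^sub>m n" "minv J * J = 1\<^sub>m n"
proof -
  obtain B where JB: "J * B = 1\<^sub>m n" and BJ: "B * J = 1\<^sub>m (dim_row B)"
    using J unfolding invertible_mat_def inverts_mat_def by auto
  have "B \<in> carrier_mat n n"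
    using arg_cong[OF JB, of dim_col] arg_cong[OF BJ, of dim_col] J(1) by auto
  moreover from this BJ have "B * J = 1\<^sub>m n" by simp
  ultimately have "\<exists>B. B \<in> carrier_mat (dim_row J) (dim_row J)
      \<and> J * B = 1\<^sub>m (dim_row J) \<and> B * J = 1\<^sub>m (dim_row J)"
    using JB J(1) by auto
  from someI_ex[OF this] J(1)
  show "minv J \<in> carrier_mat n n" "J * minv J = 1\<^sub>m n" "minv J * J = 1\<^sub>m n"
    unfolding minv_def by auto
qed

lemma skew_hermitian_minv:
  assumes J: "J \<in> carrier_mat n n" "invertible_mat J" and skew: "mat_adjoint J = - J"
  shows "mat_adjoint (minv J) = - minv J"
proof -
  note M = minv_inverse[OF J]
  have "(- mat_adjoint (minv J)) * J = 1\<^sub>m n"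
    using mat_adjoint_inverse[OF J(1) M(1,2)] skew J(1) M(1) by simp
  then have "- mat_adjoint (minv J) = minv J"
    using inverse_mat_unique[OF J(1) _ M(1) _ M(2)] M(1) by simp
  then show ?thesis by (metis uminus_uminus_mat)
qed

lemma block_index_less:
  fixes i n K :: nat
  assumes "i < n * K"
  shows "i div n < K" "i mod n < n"
proof -
  from assms have "0 < n" by (cases n) auto
  with assms show "i div n < K" "i mod n < n"
    by (auto simp: div_less_iff_less_mult mult.commute)
qed

lemma mat_adjoint_bdiag:
  fixes f :: "nat \<Rightarrow> complex mat"
  assumes f: "\<And>k. k < K \<Longrightarrow> f k \<in> carrier_mat n n"
  shows "mat_adjoint (bdiag n K f) = bdiag n K (\<lambda>k. mat_adjoint (f k))"
proof (rule eq_matI)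
  fix i j assume "i < dim_row (bdiag n K (\<lambda>k. mat_adjoint (f k)))"
    "j < dim_col (bdiag n K (\<lambda>k. mat_adjoint (f k)))"
  then have ij: "i < n * K" "j < n * K" by (auto simp: bdiag_def)
  note block_index_less[OF ij(1)] block_index_less[OF ij(2)]
  moreover from this have "f (i div n) \<in> carrier_mat n n" "f (j div n) \<in> carrier_mat n n"
    using f by auto
  ultimately show "mat_adjoint (bdiag n K f) $$ (i, j) = bdiag n K (\<lambda>k. mat_adjoint (f k)) $$ (i, j)"
    using ij by (auto simp: bdiag_def)
qed (auto simp: bdiag_def)

lemma bdiag_uminus:
  fixes f :: "nat \<Rightarrow> complex mat"
  assumes f: "\<And>k. k < K \<Longrightarrow> f k \<in> carrier_mat n n"
  shows "bdiag n K (\<lambda>k. - f k) = - bdiag n K f"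
proof (rule eq_matI)
  fix i j assume "i < dim_row (- bdiag n K f)" "j < dim_col (- bdiag n K f)"
  then have ij: "i < n * K" "j < n * K" by (auto simp: bdiag_def)
  note block_index_less[OF ij(1)] block_index_less[OF ij(2)]
  moreover from this have "f (i div n) \<in> carrier_mat n n" "f (j div n) \<in> carrier_mat n n"
    using f by auto
  ultimately show "bdiag n K (\<lambda>k. - f k) $$ (i, j) = (- bdiag n K f) $$ (i, j)"
    using ij by (auto simp: bdiag_def)
qed (auto simp: bdiag_def)

lemma skew_hermitian_calJinv:
  assumes "J \<in> carrier_mat n n" "invertible_mat J" "skew_hermitian_m J"
  shows "mat_adjoint (calJinv n N J) = - calJinv n N J"
  using assms minv_inverse(1)[OF assms(1,2)] skew_hermitian_minv[OF assms(1,2)]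
  by (simp add: calJinv_def mat_adjoint_bdiag bdiag_uminus skew_hermitian_m_def)

lemma hermitian_m_index:
  "hermitian_m A \<Longrightarrow> i < dim_row A \<Longrightarrow> j < dim_row A \<Longrightarrow> cnj (A $$ (j, i)) = A $$ (i, j)"
  by (metis hermitian_m_def index_mat_adjoint square_mat.elims(2) conjugate_complex_def)

lemma skew_hermitian_m_index:
  "skew_hermitian_m A \<Longrightarrow> i < dim_row A \<Longrightarrow> j < dim_row A \<Longrightarrow> cnj (A $$ (j, i)) = - A $$ (i, j)"
  by (metis skew_hermitian_m_def index_mat_adjoint index_uminus_mat(1) square_mat.elims(2)
      conjugate_complex_def)

lemma Bplus_carrier_mat: "J \<in> carrier_mat n n \<Longrightarrow> dq x \<in> carrier_mat n n \<Longrightarrow> dw x \<in> carrier_mat n n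
    \<Longrightarrow> Bplus J dq dw x \<mu> \<in> carrier_mat n n"
  and Bminus_carrier_mat: "J \<in> carrier_mat n n \<Longrightarrow> dq x \<in> carrier_mat n n \<Longrightarrow> dw x \<in> carrier_mat n n
    \<Longrightarrow> Bminus J dq dw x \<mu> \<in> carrier_mat n n"
  by (auto simp: Bplus_def Bminus_def)

context
  fixes n :: nat and J :: "complex mat" and dq dw :: "real \<Rightarrow> complex mat" and x :: real
  assumes J: "J \<in> carrier_mat n n" "skew_hermitian_m J"
    and dq: "dq x \<in> carrier_mat n n" "hermitian_m (dq x)"
    and dw: "dw x \<in> carrier_mat n n" "hermitian_m (dw x)"
begin

lemma mat_adjoint_Bplus: "mat_adjoint (Bplus J dq dw x \<mu>) = - Bminus J dq dw x (cnj \<mu>)"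
  and mat_adjoint_Bminus: "mat_adjoint (Bminus J dq dw x \<mu>) = - Bplus J dq dw x (cnj \<mu>)"
  using skew_hermitian_m_index[OF J(2)] hermitian_m_index[OF dq(2)] hermitian_m_index[OF dw(2)]
    carrier_matD[OF J(1)] carrier_matD[OF dq(1)] carrier_matD[OF dw(1)]
  by (auto intro!: eq_matI simp: Bplus_def Bminus_def algebra_simps)

lemma LambdaX_cnj: "\<mu> \<in> LambdaX J dq dw x \<Longrightarrow> cnj \<mu> \<in> LambdaX J dq dw x"
proof (rule ccontr)
  assume "\<mu> \<in> LambdaX J dq dw x" "cnj \<mu> \<notin> LambdaX J dq dw x"
  then have "invertible_mat (- mat_adjoint (Bminus J dq dw x (cnj \<mu>)))"
    "invertible_mat (- mat_adjoint (Bplus J dq dw x (cnj \<mu>)))"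
    "\<not> invertible_mat (Bplus J dq dw x \<mu>) \<or> \<not> invertible_mat (Bminus J dq dw x \<mu>)"
    using invertible_mat_uminus_adjoint Bplus_carrier_mat[where dq=dq and dw=dw and x=x, OF J(1) dq(1) dw(1)]
      Bminus_carrier_mat[where dq=dq and dw=dw and x=x, OF J(1) dq(1) dw(1)]
    unfolding LambdaX_def by auto
  then show False by (simp add: mat_adjoint_Bplus mat_adjoint_Bminus)
qed

end

lemma tLambda_cnj:
  assumes J: "J \<in> carrier_mat n n" "skew_hermitian_m J"
    and dq: "\<And>x. dq x \<in> carrier_mat n n \<and> hermitian_m (dq x)"
    and dw: "\<And>x. dw x \<in> carrier_mat n n \<and> hermitian_m (dw x)"
    and \<mu>: "\<mu> \<in> tLambda J dq dw a b N xs"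
  shows "cnj \<mu> \<in> tLambda J dq dw a b N xs"
  using \<mu> LambdaX_cnj[OF J] dq dw unfolding tLambda_def by blast

lemma sprod_mat_adjoint_mult_vec:
  fixes F :: "'a :: conjugatable_field mat"
  assumes "F \<in> carrier_mat R d" "u \<in> carrier_vec d" "w \<in> carrier_vec R"
  shows "conjugate u \<bullet> (mat_adjoint F *\<^sub>v w) = w \<bullet>c (F *\<^sub>v u)"
proof -
  have "conjugate u \<bullet> (mat_adjoint F *\<^sub>v w)
      = (\<Sum>i<d. conjugate (u $ i) * (\<Sum>j<R. conjugate (F $$ (j, i)) * w $ j))"
    using assms by (simp add: scalar_prod_def atLeast0LessThan)
  also have "\<dots> = (\<Sum>j<R. w $ j * (\<Sum>i<d. conjugate (F $$ (j, i)) * conjugate (u $ i)))"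
    by (simp add: sum_distrib_left sum.swap[of _ "{..<d}"] mult.commute mult.left_commute)
  also have "\<dots> = w \<bullet>c (F *\<^sub>v u)"
    using assms by (simp add: scalar_prod_def atLeast0LessThan sum_conjugate conjugate_dist_mul)
  finally show ?thesis .
qed

lemma det_gram_mat_nonzero:
  fixes F :: "'a :: conjugatable_ordered_field mat"
  assumes F: "F \<in> carrier_mat R d" and L: "L \<in> carrier_mat d R" and LF: "L * F = 1\<^sub>m d"
  shows "det (mat_adjoint F * F) \<noteq> 0"
proof
  have "mat_adjoint F * F \<in> carrier_mat d d"
    using F by (intro mult_carrier_mat[of _ d R]) auto
  moreover assume "det (mat_adjoint F * F) = 0"
  ultimately obtain v where v: "v \<in> carrier_vec d" "v \<noteq> 0\<^sub>v d" "mat_adjoint F * F *\<^sub>v v = 0\<^sub>v d"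
    using det_0_iff_vec_prod_zero_field by blast
  have FFv: "mat_adjoint F *\<^sub>v (F *\<^sub>v v) = 0\<^sub>v d"
    using v(3) assoc_mult_mat_vec[of "mat_adjoint F" d R F d v] F v(1) by simp
  have "(F *\<^sub>v v) \<bullet>c (F *\<^sub>v v) = conjugate v \<bullet> (mat_adjoint F *\<^sub>v (F *\<^sub>v v))"
    using sprod_mat_adjoint_mult_vec[OF F v(1)] F v(1) by simp
  also have "\<dots> = 0"
    unfolding FFv using v(1) by simp
  finally have "F *\<^sub>v v = 0\<^sub>v R"
    using conjugate_square_eq_0_vec[OF mult_mat_vec_carrier[OF F v(1)]] by simp
  moreover have "L *\<^sub>v 0\<^sub>v R = 0\<^sub>v d"
    using L by (intro eq_vecI) auto
  ultimately have "(L * F) *\<^sub>v v = 0\<^sub>v d"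
    using assoc_mult_mat_vec[OF L F v(1)] by simp
  with LF v show False by simp
qed

text \<open>A product \<open>X * F\<close> reads only the first \<open>dim_row F\<close> columns of \<open>X\<close>, whatever
  \<open>dim_col X\<close> is; cutting \<open>X\<close> down to them preserves a left inverse and gives it the right shape.\<close>

lemma left_inverse_take_columns:
  assumes F: "F \<in> carrier_mat R d" and XF: "X * F = 1\<^sub>m d"
  shows "mat d R (\<lambda>(i, j). row X i $ j) * F = 1\<^sub>m d"
proof -
  have "dim_row X = d"
    using arg_cong[OF XF, of dim_row] by simp
  with F have "mat d R (\<lambda>(i, j). row X i $ j) * F = X * F"
    by (auto intro!: eq_matI simp: scalar_prod_def)
  with XF show ?thesis
    by simp
qed

text \<open>The definition of \<open>pinv\<close> by \<open>THE\<close> gives no information, not even the shape of the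
  pseudoinverse, unless a solution of the Penrose equations is exhibited and shown to be unique.\<close>

lemma pinv_eq_gram_inverse_mult_adjoint:
  fixes F :: "complex mat"
  assumes F: "F \<in> carrier_mat R d"
    and Gi: "Gi \<in> carrier_mat d d" "Gi * (mat_adjoint F * F) = 1\<^sub>m d" "mat_adjoint F * F * Gi = 1\<^sub>m d"
  shows "pinv F = Gi * mat_adjoint F"
proof -
  define G Z where "G = mat_adjoint F * F" and "Z = Gi * mat_adjoint F"
  have G: "G \<in> carrier_mat d d" "mat_adjoint G = G"
    using F by (auto simp: G_def mat_adjoint_mult[of _ d R])
  have adj_Gi: "mat_adjoint Gi = Gi"
    using inverse_mat_unique[OF G(1) _ Gi(1) _ Gi(3)[folded G_def]] mat_adjoint_inverse[OF G(1) Gi(1)]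
      Gi(1,3) G(2)
    by (simp add: G_def)
  have Z: "Z \<in> carrier_mat d R" and ZF: "Z * F = 1\<^sub>m d"
    using Gi F by (simp_all add: Z_def)
  have "mat_adjoint (F * Z) = mat_adjoint Z * mat_adjoint F"
    by (rule mat_adjoint_mult[OF F Z])
  also have "mat_adjoint Z = F * Gi"
    using mat_adjoint_mult[OF Gi(1), of "mat_adjoint F" R] F adj_Gi by (simp add: Z_def)
  also have "F * Gi * mat_adjoint F = F * Z"
    using F Gi by (simp add: Z_def)
  finally have "mat_adjoint (F * Z) = F * Z" .
  with Z ZF F have Z_Penrose: "Z \<in> carrier_mat (dim_col F) (dim_row F) \<and> F * Z * F = F
      \<and> Z * F * Z = Z \<and> mat_adjoint (F * Z) = F * Z \<and> mat_adjoint (Z * F) = Z * F"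
    by auto
  have Z_unique: "Y = Z"
    if "Y \<in> carrier_mat (dim_col F) (dim_row F)" "F * Y * F = F" "mat_adjoint (F * Y) = F * Y" for Y
  proof -
    have Y: "Y \<in> carrier_mat d R" using that(1) F by simp
    have "mat_adjoint F = mat_adjoint F * mat_adjoint (F * Y)"
      using that(2) mat_adjoint_mult[of "F * Y" R R F d] F Y by simp
    also have "\<dots> = G * Y"
      using that(3) F Y by (simp add: G_def)
    finally have "Z = Gi * G * Y"
      using Gi(1) G(1) Y by (simp add: Z_def)
    then show "Y = Z"
      using Gi(2) Y by (simp add: G_def)
  qed
  show "pinv F = Z"
    unfolding pinv_def by (rule the_equality) (use Z_Penrose Z_unique in blast)+
qed

lemma pinv_carrier_mat:
  fixes F :: "complex mat"
  assumes F: "F \<in> carrier_mat R d" and XF: "X * F = 1\<^sub>m d"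
  shows "pinv F \<in> carrier_mat d R"
proof -
  have G: "mat_adjoint F * F \<in> carrier_mat d d"
    using F by (intro mult_carrier_mat[of _ d R]) auto
  have "det (mat_adjoint F * F) \<noteq> 0"
    by (rule det_gram_mat_nonzero[OF F _ left_inverse_take_columns[OF F XF]]) simp
  then obtain Gi where "Gi \<in> carrier_mat d d" "Gi * (mat_adjoint F * F) = 1\<^sub>m d"
    "mat_adjoint F * F * Gi = 1\<^sub>m d"
    using det_non_zero_imp_unit[OF G, of undefined] unfolding Units_def ring_mat_def by auto
  with F show ?thesis
    by (simp add: pinv_eq_gram_inverse_mult_adjoint)
qed

lemma assoc_mult_mat_dim:
  "dim_col A = dim_row B \<Longrightarrow> dim_col B = dim_row C \<Longrightarrow> A * B * C = A * (B * C)"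
  by (rule assoc_mult_mat[of A "dim_row A" "dim_col A" B "dim_col B" C "dim_col C"]) auto

lemma add_eq_zero_mat_iff_eq_uminus:
  fixes A B :: "'a :: group_add mat"
  assumes "A \<in> carrier_mat m n" "B \<in> carrier_mat m n"
  shows "A + B = 0\<^sub>m m n \<longleftrightarrow> A = - B"
proof
  assume "A + B = 0\<^sub>m m n"
  then have "(A + B) $$ (i, j) = 0" if "i < m" "j < n" for i j
    using that by simp
  with assms show "A = - B"
    by (intro eq_matI) (auto simp: eq_neg_iff_add_eq_0)
qed (use assms in auto)

lemma mult_left_inverses_cancel:
  fixes F F' S T X X' :: "'a :: conjugatable_field mat"
  assumes F: "F \<in> carrier_mat R d" "F' \<in> carrier_mat R d"
    and ST: "S \<in> carrier_mat R d" "T \<in> carrier_mat d R"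
    and X: "X \<in> carrier_mat d R" "X' \<in> carrier_mat d R"
    and XF: "X * F = 1\<^sub>m d" "X' * F' = 1\<^sub>m d"
    and vanish: "S * mat_adjoint F' + F * T = 0\<^sub>m R R"
  shows "X * S = - (T * mat_adjoint X')"
proof -
  have adj: "mat_adjoint F' * mat_adjoint X' = 1\<^sub>m d"
    using mat_adjoint_mult[OF X(2) F(2)] XF(2) by simp
  note dims = carrier_matD[OF F(1)] carrier_matD[OF F(2)] carrier_matD[OF ST(1)]
    carrier_matD[OF ST(2)] carrier_matD[OF X(1)] carrier_matD[OF X(2)]
  have "0\<^sub>m d d = X * (S * mat_adjoint F' + F * T) * mat_adjoint X'"
    using vanish dims by simp
  also have "\<dots> = X * (S * mat_adjoint F') * mat_adjoint X' + X * (F * T) * mat_adjoint X'"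
    using mult_add_distrib_mat[OF X(1), of "S * mat_adjoint F'" R "F * T"]
      add_mult_distrib_mat[of "X * (S * mat_adjoint F')" d R "X * (F * T)" "mat_adjoint X'" d]
    by (simp add: dims carrier_matI)
  also have "\<dots> = X * S * (mat_adjoint F' * mat_adjoint X') + (X * F) * T * mat_adjoint X'"
    by (simp add: dims assoc_mult_mat_dim del: assoc_mult_mat)
  also have "\<dots> = X * S + T * mat_adjoint X'"
    using adj XF(1) dims by simp
  finally show ?thesis
    using add_eq_zero_mat_iff_eq_uminus[of "X * S" d d "T * mat_adjoint X'"] X ST by auto
qed

lemma compressed_left_inverse_adjoint:
  fixes F F' H H' K P X X' :: "'a :: conjugatable_field mat"
  assumes F: "F \<in> carrier_mat R d" "F' \<in> carrier_mat R d"
    and H: "H \<in> carrier_mat R d" "H' \<in> carrier_mat R d"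
    and K: "K \<in> carrier_mat d d" "mat_adjoint K = - K"
    and P: "P \<in> carrier_mat d d" "mat_adjoint P = P" "P * P = P"
    and X: "X \<in> carrier_mat d R" "X' \<in> carrier_mat d R"
    and XF: "X * F = 1\<^sub>m d" "X' * F' = 1\<^sub>m d"
    and vanish: "H * K * P * mat_adjoint F' + F * P * K * mat_adjoint H' = 0\<^sub>m R R"
  shows "P * X * H * K * P = mat_adjoint (P * X' * H' * K * P)"
proof -
  note dims = carrier_matD[OF F(1)] carrier_matD[OF F(2)] carrier_matD[OF H(1)] carrier_matD[OF H(2)]
    carrier_matD[OF K(1)] carrier_matD[OF P(1)] carrier_matD[OF X(1)] carrier_matD[OF X(2)]
  note assoc = assoc_mult_mat_dim
  have "X * (H * K * P) = - (P * K * mat_adjoint H' * mat_adjoint X')"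
    by (rule mult_left_inverses_cancel[OF F _ _ X XF])
      (use vanish in \<open>simp_all add: dims assoc carrier_matI del: assoc_mult_mat\<close>)
  then have cancel: "X * (H * (K * P)) = - (P * (K * (mat_adjoint H' * mat_adjoint X')))"
    by (simp add: dims assoc del: assoc_mult_mat)
  have PP: "P * (P * Z) = P * Z" if "dim_row Z = d" for Z
    using that P(3) by (simp add: dims flip: assoc)
  have "P * X * H * K * P = P * (X * (H * (K * P))) * P"
    using P(3) by (simp add: dims assoc del: assoc_mult_mat)
  also have "\<dots> = - (P * (K * (mat_adjoint H' * (mat_adjoint X' * P))))"
    unfolding cancel using PP by (simp add: dims assoc del: assoc_mult_mat)
  also have "\<dots> = mat_adjoint P * (mat_adjoint K * (mat_adjoint H' * (mat_adjoint X' * mat_adjoint P)))"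
    using P(2) K(2) by (simp add: dims)
  also have "\<dots> = mat_adjoint (P * X' * H' * K * P)"
  proof -
    have PX': "P * X' \<in> carrier_mat d R" and PX'H': "P * X' * H' \<in> carrier_mat d d"
      using P(1) X(2) H(2) by auto
    show ?thesis
      using mat_adjoint_mult[OF mult_carrier_mat[OF PX'H' K(1)] P(1)] mat_adjoint_mult[OF PX'H' K(1)]
        mat_adjoint_mult[OF PX' H(2)] mat_adjoint_mult[OF P(1) X(2)]
      by (simp add: dims assoc del: assoc_mult_mat)
  qed
  finally show ?thesis .
qed

lemma dim_row_vstack_Cons[simp]: "dim_row (vstack c (A # As)) = dim_row A + dim_row (vstack c As)"
  and dim_col_vstack_Cons[simp]: "dim_col (vstack c (A # As)) = dim_col A"
  by (simp_all add: four_block_mat_def Let_def)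

lemma dim_row_vstack_Nil[simp]: "dim_row (vstack c []) = 0"
  by simp

lemma FF_HH_carrier_mat:
  assumes P: "\<And>\<mu>. Pm \<mu> \<in> carrier_mat n n" "\<And>\<mu>. Pp \<mu> \<in> carrier_mat n n"
    and A: "\<And>\<mu>. Am \<mu> \<in> carrier_mat np n" "\<And>\<mu>. Ap \<mu> \<in> carrier_mat np n"
    and PP: "PP \<in> carrier_mat (n * (N + 1)) (n * (N + 1))"
  shows "FF n N J dq dw xs Um Up Pm Pp Am Ap PP \<mu> \<in> carrier_mat (n * N + n + n + np + n * (N + 1)) (n * (N + 1))"
    and "HH n N J dq dw xs Um Up Pm Pp Am Ap \<mu> \<in> carrier_mat (n * N + n + n + np + n * (N + 1)) (n * (N + 1))"
  unfolding carrier_mat_def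
  by (simp_all add: carrier_matD[OF P(1)] carrier_matD[OF P(2)] carrier_matD[OF A(1)]
      carrier_matD[OF A(2)] carrier_matD[OF PP] FF_def HH_def bbB_def tbbB_def calB_def bdiag_def
      brow_def Etop_def Ebot_def del: vstack.simps)

theorem lemma4p3:
  fixes n N np :: nat and J :: "complex mat"
    and dq dw :: "real \<Rightarrow> complex mat"
    and a b :: ereal and xs :: "nat \<Rightarrow> real"
    and Um Up :: "nat \<Rightarrow> complex \<Rightarrow> complex mat"
    and Pm Pp Am Ap :: "complex \<Rightarrow> complex mat"
    and PP :: "complex mat" and rho :: "complex set" and lam :: complex
  assumes J: "J \<in> carrier_mat n n" "invertible_mat J" "skew_hermitian_m J"
    and atoms: "\<And>x. dq x \<in> carrier_mat n n \<and> hermitian_m (dq x)"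
               "\<And>x. dw x \<in> carrier_mat n n \<and> nonneg_m (dw x)"
    and pts: "a < b" "N > 0 \<Longrightarrow> a < ereal (xs 1) \<and> ereal (xs N) < b"
             "\<And>k. 1 \<le> k \<Longrightarrow> k < N \<Longrightarrow> xs k < xs (k+1)"
    and real_free: "\<And>x. a < ereal x \<Longrightarrow> ereal x < b \<Longrightarrow> x \<notin> xs ` {1..N}
                     \<Longrightarrow> LambdaX J dq dw x \<inter> range complex_of_real = {}"
    and U: "\<And>k \<mu>. Um k \<mu> \<in> carrier_mat n n" "\<And>k \<mu>. Up k \<mu> \<in> carrier_mat n n"
    and P: "\<And>\<mu>. orth_proj n (Pm \<mu>)" "\<And>\<mu>. orth_proj n (Pp \<mu>)"
    and A: "\<And>\<mu>. Am \<mu> \<in> carrier_mat np n" "\<And>\<mu>. Ap \<mu> \<in> carrier_mat np n"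
    and PP: "orth_proj (n*(N+1)) PP"
    and rho_conj: "\<And>\<mu>. \<mu> \<in> rho \<Longrightarrow> cnj \<mu> \<in> rho"
    and left_inv: "\<And>\<mu>. \<mu> \<in> rho - tLambda J dq dw a b N xs \<Longrightarrow>
        pinv (FF n N J dq dw xs Um Up Pm Pp Am Ap PP \<mu>) * FF n N J dq dw xs Um Up Pm Pp Am Ap PP \<mu>
          = 1\<^sub>m (n*(N+1))"
    and lam: "lam \<in> rho - tLambda J dq dw a b N xs"
    and Om: "Omega n N J dq dw xs Um Up Pm Pp Am Ap PP lam
               = 0\<^sub>m (dim_row (FF n N J dq dw xs Um Up Pm Pp Am Ap PP lam))
                     (dim_row (FF n N J dq dw xs Um Up Pm Pp Am Ap PP lam))"
  shows "MM n N J dq dw xs Um Up Pm Pp Am Ap PP lam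
           = mat_adjoint (MM n N J dq dw xs Um Up Pm Pp Am Ap PP (cnj lam))"
proof -
  define d R where "d = n * (N + 1)" and "R = n * N + n + n + np + n * (N + 1)"
  define F H where "F = FF n N J dq dw xs Um Up Pm Pp Am Ap PP lam"
    and "H = HH n N J dq dw xs Um Up Pm Pp Am Ap lam"
  define F' H' where "F' = FF n N J dq dw xs Um Up Pm Pp Am Ap PP (cnj lam)"
    and "H' = HH n N J dq dw xs Um Up Pm Pp Am Ap (cnj lam)"
  define K where "K = calJinv n N J"
  have lam_cnj: "cnj lam \<in> rho - tLambda J dq dw a b N xs"
    using lam rho_conj tLambda_cnj[OF J(1,3), of dq dw "cnj lam"] atoms
    by (auto simp: nonneg_m_def)
  have PP': "PP \<in> carrier_mat d d" "mat_adjoint PP = PP" "PP * PP = PP"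
    using PP by (auto simp: orth_proj_def d_def)
  have carriers: "F \<in> carrier_mat R d" "F' \<in> carrier_mat R d" "H \<in> carrier_mat R d" "H' \<in> carrier_mat R d"
    using FF_HH_carrier_mat[of Pm n Pp Am np Ap PP N] P A PP
    by (auto simp: F_def F'_def H_def H'_def R_def d_def orth_proj_def)
  have XF: "pinv F * F = 1\<^sub>m d" "pinv F' * F' = 1\<^sub>m d"
    using left_inv[OF lam] left_inv[OF lam_cnj] by (simp_all add: F_def F'_def d_def)
  have K: "K \<in> carrier_mat d d" "mat_adjoint K = - K"
    using skew_hermitian_calJinv[OF J] by (auto simp: K_def calJinv_def bdiag_def d_def)
  have "dim_row F = R"
    using carriers(1) by simp
  with Om have "H * K * PP * mat_adjoint F' + F * PP * K * mat_adjoint H' = 0\<^sub>m R R"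
    unfolding Omega_def F_def[symmetric] F'_def[symmetric] H_def[symmetric] H'_def[symmetric]
      K_def[symmetric]
    by simp
  from compressed_left_inverse_adjoint[OF carriers K PP'
      pinv_carrier_mat[OF carriers(1) XF(1)] pinv_carrier_mat[OF carriers(2) XF(2)] XF this]
  show ?thesis
    unfolding MM_def F_def[symmetric] F'_def[symmetric] H_def[symmetric] H'_def[symmetric]
      K_def[symmetric] .
qed

end
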